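(* Let $\mathcal H$ be a finite-dimensional complex Hilbert space, $A,B$ Hermitian operators on $\mathcal H$, $\rho$ a density operator on $\mathcal H$ and $|\phi\rangle$ a unit vector. Set $W_{AB}=\langle\phi|B\rho A|\phi\rangle$. Then $$\big(\langle\Delta A\rangle^{\phi}_{\rho}\big)^2\big(\langle\Delta B\rangle^{\phi}_{\rho}\big)^2\ge\Big[\tfrac{1}{2i}\operatorname{Tr}(\rho[A,B])-\operatorname{Im}W_{AB}\Big]^2+\Big[\tfrac12\operatorname{Tr}(\rho\{A,B\})-\operatorname{Re}W_{AB}\Big]^2,$$ and in particular $\big(\langle\Delta A\rangle^{\phi}_{\rho}\big)^2\big(\langle\Delta B\rangle^{\phi}_{\rho}\big)^2\ge\big[\tfrac{1}{2i}\operatorname{Tr}(\rho[A,B])-\operatorname{Im}W_{AB}\big]^2$. The same lower bound holds with $\langle\Delta A\rangle^{\phi}_{\rho},\langle\Delta B\rangle^{\phi}_{\rho}$ replaced by $\langle\Delta A_w\rangle^{\phi}_{\rho},\langle\Delta B_w\rangle^{\phi}_{\rho}$ whenever $\langle\phi|\rho|\phi\rangle>0$.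
   Context: For a density operator $\rho$, Hermitian $X$ and unit vector $|\phi\rangle$: $\big(\langle\Delta X\rangle^{\phi}_{\rho}\big)^2:=\operatorname{Tr}(X^2\rho)-\langle\phi|X\rho X|\phi\rangle$; if $\langle\phi|\rho|\phi\rangle>0$, $\big(\langle\Delta X_w\rangle^{\phi}_{\rho}\big)^2:=\operatorname{Tr}(X^2\rho)-\frac{|\langle\phi|X\rho|\phi\rangle|^2}{\langle\phi|\rho|\phi\rangle}$. $[A,B]=AB-BA$, $\{A,B\}=AB+BA$. *)

theory Defs
  imports "HOL-Analysis.Analysis"
begin

text \<open>Operators on the finite-dimensional complex Hilbert space C^'n, represented as
  complex matrices indexed by a finite type 'n (arbitrary finite dimension).\<close>

definition adjoint_mat :: "complex^'n^'n \<Rightarrow> complex^'n^'n" where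
  "adjoint_mat A = (\<chi> i j. cnj (A $ j $ i))"

definition hermitian_mat :: "complex^'n^'n \<Rightarrow> bool" where
  "hermitian_mat A \<longleftrightarrow> adjoint_mat A = A"

definition cinner :: "complex^'n \<Rightarrow> complex^'n \<Rightarrow> complex" where
  "cinner x y = (\<Sum>i\<in>UNIV. cnj (x $ i) * y $ i)"

definition unit_vec :: "complex^'n \<Rightarrow> bool" where
  "unit_vec v \<longleftrightarrow> cinner v v = 1"

definition density_op :: "complex^'n^'n \<Rightarrow> bool" where
  "density_op \<rho> \<longleftrightarrow> hermitian_mat \<rho> \<and>
     (\<forall>v. Im (cinner v (\<rho> *v v)) = 0 \<and> Re (cinner v (\<rho> *v v)) \<ge> 0) \<and>
     trace \<rho> = 1"

definition commutator :: "complex^'n^'n \<Rightarrow> complex^'n^'n \<Rightarrow> complex^'n^'n" where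
  "commutator A B = A ** B - B ** A"

definition anticommutator :: "complex^'n^'n \<Rightarrow> complex^'n^'n \<Rightarrow> complex^'n^'n" where
  "anticommutator A B = A ** B + B ** A"

text \<open>(\<langle>\<Delta>X\<rangle>^\<phi>_\<rho>)^2 = Tr(X^2 \<rho>) - \<langle>\<phi>|X\<rho>X|\<phi>\<rangle>  (a real number for Hermitian X and
  density \<rho>; we take its real part).\<close>
definition var_phi :: "complex^'n^'n \<Rightarrow> complex^'n^'n \<Rightarrow> complex^'n \<Rightarrow> real" where
  "var_phi \<rho> X \<phi> = Re (trace (X ** X ** \<rho>) - cinner \<phi> ((X ** \<rho> ** X) *v \<phi>))"

text \<open>(\<langle>\<Delta>X_w\<rangle>^\<phi>_\<rho>)^2 = Tr(X^2 \<rho>) - |\<langle>\<phi>|X\<rho>|\<phi>\<rangle>|^2 / \<langle>\<phi>|\<rho>|\<phi>\<rangle>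
  (meaningful when \<langle>\<phi>|\<rho>|\<phi>\<rangle> > 0).\<close>
definition var_w_phi :: "complex^'n^'n \<Rightarrow> complex^'n^'n \<Rightarrow> complex^'n \<Rightarrow> real" where
  "var_w_phi \<rho> X \<phi> = Re (trace (X ** X ** \<rho>))
     - (cmod (cinner \<phi> ((X ** \<rho>) *v \<phi>)))^2 / Re (cinner \<phi> (\<rho> *v \<phi>))"

end

theory Submission imports Defs begin

text \<open>Put \<open>P = 1 - |\<phi>\<rangle>\<langle>\<phi>|\<close>. For Hermitian \<open>X\<close> one has
  \<open>Tr(X\<^sup>2\<rho>) - \<langle>\<phi>|X\<rho>X|\<phi>\<rangle> = Tr((XP)\<^sup>\<dagger> \<rho> (XP))\<close>, and \<open>(X, Y) \<mapsto> Tr(X\<^sup>\<dagger> \<rho> Y)\<close> is a positive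
  semidefinite sesquilinear form on operators. Its Cauchy--Schwarz inequality for \<open>AP\<close> and \<open>BP\<close>
  is the claim, because \<open>Tr((BP)\<^sup>\<dagger> \<rho> (AP)) = Tr(\<rho>AB) - W\<^sub>A\<^sub>B\<close> and the two brackets are the imaginary
  and real parts of this number. The weak variances dominate the ordinary ones by Cauchy--Schwarz
  for the form \<open>(x, y) \<mapsto> \<langle>x|\<rho>y\<rangle>\<close>: \<open>|\<langle>X\<phi>|\<rho>\<phi>\<rangle>|\<^sup>2 \<le> \<langle>\<phi>|\<rho>|\<phi>\<rangle> \<langle>X\<phi>|\<rho>|X\<phi>\<rangle>\<close>.\<close>

lemma hermitian_quadratic_cauchy_schwarz:
  fixes a b k1 k2 :: complex
  assumes nonneg: "\<And>z. Im (a + z * k1 + cnj z * k2 + cnj z * z * b) = 0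
                       \<and> Re (a + z * k1 + cnj z * k2 + cnj z * z * b) \<ge> 0"
    and b_nonneg: "Re b \<ge> 0"
  shows "(cmod k2)\<^sup>2 \<le> Re a * Re b"
proof -
  have a: "Im a = 0" "Re a \<ge> 0" using nonneg[of 0] by auto
  have "Im (a + k1 + k2 + b) = 0" "Im (a - k1 - k2 + b) = 0" "Im (a + \<i> * k1 - \<i> * k2 + b) = 0"
    using nonneg[of 1] nonneg[of "-1"] nonneg[of \<i>] by simp_all
  with a have b: "Im b = 0" and k1: "k1 = cnj k2" by (simp_all add: complex_eq_iff)
  define n where "n = (cmod k2)\<^sup>2"
  have quadratic: "Re a - 2 * t * n + t\<^sup>2 * n * Re b \<ge> 0" for t :: real
  proof -
    define z where "z = - of_real t * k2"
    have "Re (a + z * k1 + cnj z * k2 + cnj z * z * b) = Re a - 2 * t * n + t\<^sup>2 * n * Re b"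
      using b unfolding n_def z_def k1 cmod_power2
      by (cases k2, cases b) (simp add: power2_eq_square algebra_simps)
    with nonneg[of z] show ?thesis by simp
  qed
  consider "n = 0" | "n > 0" "Re b = 0" | "n > 0" "Re b > 0"
    using b_nonneg unfolding n_def by fastforce
  then show ?thesis
  proof cases
    case 1
    then show ?thesis using a b_nonneg n_def by simp
  next
    case 2
    with quadratic[of "(Re a + 1) / (2 * n)"] show ?thesis by simp
  next
    case 3
    with quadratic[of "1 / Re b"] show ?thesis
      by (simp add: n_def field_simps power2_eq_square)
  qed
qed

definition psd_mat :: "complex^'n^'n \<Rightarrow> bool" where
  "psd_mat r \<longleftrightarrow> (\<forall>v. Im (cinner v (r *v v)) = 0 \<and> Re (cinner v (r *v v)) \<ge> 0)"

lemma density_op_psd: "density_op r \<Longrightarrow> psd_mat r"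
  by (simp add: density_op_def psd_mat_def)

lemma cinner_add_left: "cinner (x + y) w = cinner x w + cinner y w"
  by (simp add: cinner_def algebra_simps sum.distrib)

lemma cinner_add_right: "cinner w (x + y) = cinner w x + cinner w y"
  by (simp add: cinner_def algebra_simps sum.distrib)

lemma cinner_scale_left: "cinner (c *s x) w = cnj c * cinner x w"
  by (simp add: cinner_def sum_distrib_left mult_ac)

lemma cinner_scale_right: "cinner w (c *s x) = c * cinner w x"
  by (simp add: cinner_def sum_distrib_left mult_ac)

lemma cinner_matrix_adjoint: "cinner x (M *v y) = cinner (adjoint_mat M *v x) y"
  unfolding cinner_def adjoint_mat_def matrix_vector_mult_def
  by (simp add: sum_distrib_left sum_distrib_right mult_ac) (rule sum.swap)

lemma cinner_matrix_expand:
  "cinner (x + z *s y) (M *v (x + z *s y)) = cinner x (M *v x) + z * cinner x (M *v y)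
     + cnj z * cinner y (M *v x) + cnj z * z * cinner y (M *v y)"
  by (simp add: matrix_vector_right_distrib vector_scalar_commute cinner_add_left
      cinner_add_right cinner_scale_left cinner_scale_right algebra_simps)

lemma psd_sum_cauchy_schwarz:
  assumes "psd_mat r"
  shows "(cmod (\<Sum>i\<in>I. cinner (y i) (r *v x i)))\<^sup>2
           \<le> Re (\<Sum>i\<in>I. cinner (x i) (r *v x i)) * Re (\<Sum>i\<in>I. cinner (y i) (r *v y i))"
proof (rule hermitian_quadratic_cauchy_schwarz)
  have psd: "Im (\<Sum>i\<in>I. cinner (v i) (r *v v i)) = 0 \<and> Re (\<Sum>i\<in>I. cinner (v i) (r *v v i)) \<ge> 0"
    for v
    using assms unfolding psd_mat_def Im_sum Re_sum by (simp add: sum_nonneg)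
  let ?q = "\<lambda>u v. \<Sum>i\<in>I. cinner (u i) (r *v v i)"
  show "Im (?q x x + z * ?q x y + cnj z * ?q y x + cnj z * z * ?q y y) = 0
        \<and> Re (?q x x + z * ?q x y + cnj z * ?q y x + cnj z * z * ?q y y) \<ge> 0" for z
    using psd[of "\<lambda>i. x i + z *s y i"]
    by (simp only: cinner_matrix_expand sum.distrib sum_distrib_left)
  show "Re (?q y y) \<ge> 0" using psd by blast
qed

lemma psd_cauchy_schwarz:
  assumes "psd_mat r"
  shows "(cmod (cinner y (r *v x)))\<^sup>2 \<le> Re (cinner x (r *v x)) * Re (cinner y (r *v y))"
  using psd_sum_cauchy_schwarz[OF assms, where I = "{()}" and x = "\<lambda>_. x" and y = "\<lambda>_. y"] by simp

lemma trace_adjoint_mult_eq_sum_columns: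
  "trace (adjoint_mat X ** r ** Y) = (\<Sum>i\<in>UNIV. cinner (column i X) (r *v column i Y))"
  unfolding trace_def column_def cinner_def adjoint_mat_def matrix_matrix_mult_def
    matrix_vector_mult_def
  by (simp add: sum_distrib_left sum_distrib_right mult_ac) (rule sum.cong[OF refl], rule sum.swap)

lemma psd_trace_form_nonneg: "psd_mat r \<Longrightarrow> Re (trace (adjoint_mat X ** r ** X)) \<ge> 0"
  unfolding trace_adjoint_mult_eq_sum_columns psd_mat_def Re_sum by (simp add: sum_nonneg)

lemma psd_trace_form_cauchy_schwarz:
  assumes "psd_mat r"
  shows "(cmod (trace (adjoint_mat Y ** r ** X)))\<^sup>2
           \<le> Re (trace (adjoint_mat X ** r ** X)) * Re (trace (adjoint_mat Y ** r ** Y))"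
  unfolding trace_adjoint_mult_eq_sum_columns by (rule psd_sum_cauchy_schwarz[OF assms])

lemma adjoint_mat_mult: "adjoint_mat (X ** Y) = adjoint_mat Y ** adjoint_mat X"
  by (simp add: adjoint_mat_def matrix_matrix_mult_def vec_eq_iff mult.commute)

lemma adjoint_mat_diff: "adjoint_mat (X - Y) = adjoint_mat X - adjoint_mat Y"
  by (simp add: adjoint_mat_def vec_eq_iff)

lemma adjoint_mat_id: "adjoint_mat (mat 1) = mat 1"
  by (simp add: adjoint_mat_def vec_eq_iff mat_def)

lemma trace_adjoint_mat: "trace (adjoint_mat M) = cnj (trace M)"
  by (simp add: adjoint_mat_def trace_def)

lemma matrix_diff_ldistrib: "(A :: 'a::ring_1^'n^'m) ** (B - C) = A ** B - A ** C"
  by (simp add: matrix_matrix_mult_def vec_eq_iff algebra_simps sum_subtractf)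

lemma matrix_diff_rdistrib: "((B :: 'a::ring_1^'n^'m) - C) ** A = B ** A - C ** A"
  by (simp add: matrix_matrix_mult_def vec_eq_iff algebra_simps sum_subtractf)

lemma trace_mul_cyclic: "trace ((X :: 'a::comm_ring_1^'n^'n) ** Y ** Z) = trace (Y ** Z ** X)"
  using trace_mul_sym[of X "Y ** Z"] by (simp add: matrix_mul_assoc)

definition proj_onto :: "complex^'n \<Rightarrow> complex^'n^'n" where
  "proj_onto v = (\<chi> i j. v $ i * cnj (v $ j))"

lemma adjoint_proj_onto: "adjoint_mat (proj_onto v) = proj_onto v"
  by (simp add: adjoint_mat_def vec_eq_iff proj_onto_def mult.commute)

lemma trace_mult_proj_onto: "trace (M ** proj_onto v) = cinner v (M *v v)"
  by (simp add: trace_def cinner_def proj_onto_def matrix_matrix_mult_def matrix_vector_mult_def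
      sum_distrib_left mult_ac)

lemma proj_onto_idem:
  assumes "unit_vec v"
  shows "proj_onto v ** proj_onto v = proj_onto v"
proof -
  have "(\<Sum>k\<in>UNIV. v $ i * cnj (v $ k) * (v $ k * cnj (v $ j)))
          = v $ i * cnj (v $ j) * cinner v v" for i j
    by (simp add: cinner_def sum_distrib_left mult_ac)
  with assms show ?thesis
    by (simp add: unit_vec_def proj_onto_def matrix_matrix_mult_def vec_eq_iff)
qed

lemma trace_form_compl_proj_onto:
  assumes "unit_vec v"
  defines "P \<equiv> mat 1 - proj_onto v"
  shows "trace (adjoint_mat (X ** P) ** r ** (Y ** P))
           = trace (adjoint_mat X ** r ** Y) - cinner v ((adjoint_mat X ** r ** Y) *v v)"
proof -
  define Q where "Q = adjoint_mat X ** r ** Y"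
  have P_adjoint: "adjoint_mat P = P"
    unfolding P_def by (simp add: adjoint_mat_diff adjoint_mat_id adjoint_proj_onto)
  have P_idem: "P ** P = P"
    unfolding P_def by (simp add: matrix_diff_ldistrib matrix_diff_rdistrib proj_onto_idem[OF assms(1)])
  have "trace (adjoint_mat (X ** P) ** r ** (Y ** P)) = trace (P ** Q ** P)"
    unfolding adjoint_mat_mult P_adjoint Q_def by (simp add: matrix_mul_assoc)
  also have "\<dots> = trace (Q ** (P ** P))"
    unfolding trace_mul_cyclic[of P] by (simp add: matrix_mul_assoc)
  also have "\<dots> = trace Q - cinner v (Q *v v)"
    unfolding P_idem by (simp add: P_def matrix_diff_ldistrib trace_sub trace_mult_proj_onto)
  finally show ?thesis unfolding Q_def .
qed

lemma var_phi_eq_trace_form: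
  assumes "hermitian_mat X" and "unit_vec \<phi>"
  defines "P \<equiv> mat 1 - proj_onto \<phi>"
  shows "var_phi \<rho> X \<phi> = Re (trace (adjoint_mat (X ** P) ** \<rho> ** (X ** P)))"
  using assms trace_mul_cyclic[of X X \<rho>]
  by (simp add: var_phi_def trace_form_compl_proj_onto hermitian_mat_def)

lemma var_phi_nonneg:
  assumes "hermitian_mat X" and "unit_vec \<phi>" and "density_op \<rho>"
  shows "var_phi \<rho> X \<phi> \<ge> 0"
  using assms by (simp add: var_phi_eq_trace_form psd_trace_form_nonneg density_op_psd)

lemma var_phi_le_var_w_phi:
  assumes "hermitian_mat X" and "density_op \<rho>" and pos: "Re (cinner \<phi> (\<rho> *v \<phi>)) > 0"
  shows "var_phi \<rho> X \<phi> \<le> var_w_phi \<rho> X \<phi>"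
proof -
  have X: "adjoint_mat X = X" using assms(1) by (simp add: hermitian_mat_def)
  have "cinner \<phi> ((X ** \<rho>) *v \<phi>) = cinner (X *v \<phi>) (\<rho> *v \<phi>)"
    and "cinner \<phi> ((X ** \<rho> ** X) *v \<phi>) = cinner (X *v \<phi>) (\<rho> *v (X *v \<phi>))"
    by (simp_all flip: matrix_vector_mul_assoc add: cinner_matrix_adjoint X)
  with psd_cauchy_schwarz[OF density_op_psd[OF assms(2)], of "X *v \<phi>" \<phi>]
  have "(cmod (cinner \<phi> ((X ** \<rho>) *v \<phi>)))\<^sup>2
          \<le> Re (cinner \<phi> (\<rho> *v \<phi>)) * Re (cinner \<phi> ((X ** \<rho> ** X) *v \<phi>))"
    by simp
  with pos have "(cmod (cinner \<phi> ((X ** \<rho>) *v \<phi>)))\<^sup>2 / Re (cinner \<phi> (\<rho> *v \<phi>))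
                   \<le> Re (cinner \<phi> ((X ** \<rho> ** X) *v \<phi>))"
    by (simp add: divide_simps mult.commute)
  then show ?thesis by (simp add: var_w_phi_def var_phi_def)
qed

lemma trace_hermitian_mult_swap:
  assumes "hermitian_mat A" and "hermitian_mat B" and "hermitian_mat \<rho>"
  shows "trace (\<rho> ** (B ** A)) = cnj (trace (\<rho> ** (A ** B)))"
  using assms trace_mul_sym[of "B ** A" \<rho>]
  by (simp flip: trace_adjoint_mat add: adjoint_mat_mult hermitian_mat_def)

lemma var_phi_mult_ge_cmod:
  assumes "hermitian_mat A" and "hermitian_mat B" and "density_op \<rho>" and "unit_vec \<phi>"
  shows "(cmod (trace (\<rho> ** (A ** B)) - cinner \<phi> ((B ** \<rho> ** A) *v \<phi>)))\<^sup>2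
           \<le> var_phi \<rho> A \<phi> * var_phi \<rho> B \<phi>"
proof -
  define P where "P = mat 1 - proj_onto \<phi>"
  have "trace (adjoint_mat (B ** P) ** \<rho> ** (A ** P))
          = trace (\<rho> ** (A ** B)) - cinner \<phi> ((B ** \<rho> ** A) *v \<phi>)"
    using assms(2,4) trace_mul_cyclic[of B \<rho> A]
    by (simp add: P_def trace_form_compl_proj_onto hermitian_mat_def, simp add: matrix_mul_assoc)
  with psd_trace_form_cauchy_schwarz[OF density_op_psd[OF assms(3)], of "B ** P" "A ** P"]
  show ?thesis
    using assms by (simp add: var_phi_eq_trace_form P_def mult.commute)
qed

theorem mainTheorem8:
  fixes A B \<rho> :: "complex^'n^'n" and \<phi> :: "complex^'n"
  assumes "hermitian_mat A" and "hermitian_mat B"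
    and "density_op \<rho>" and "unit_vec \<phi>"
  defines "W \<equiv> cinner \<phi> ((B ** \<rho> ** A) *v \<phi>)"
  defines "C \<equiv> Re (trace (\<rho> ** commutator A B) / (2 * \<i>)) - Im W"
  defines "D \<equiv> Re (trace (\<rho> ** anticommutator A B) / 2) - Re W"
  shows "var_phi \<rho> A \<phi> * var_phi \<rho> B \<phi> \<ge> C\<^sup>2 + D\<^sup>2
         \<and> var_phi \<rho> A \<phi> * var_phi \<rho> B \<phi> \<ge> C\<^sup>2
         \<and> (Re (cinner \<phi> (\<rho> *v \<phi>)) > 0 \<longrightarrow>
               var_w_phi \<rho> A \<phi> * var_w_phi \<rho> B \<phi> \<ge> C\<^sup>2 + D\<^sup>2
             \<and> var_w_phi \<rho> A \<phi> * var_w_phi \<rho> B \<phi> \<ge> C\<^sup>2)"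
proof -
  define t where "t = trace (\<rho> ** (A ** B))"
  have swap: "trace (\<rho> ** (B ** A)) = cnj t"
    unfolding t_def using assms(1-3) by (intro trace_hermitian_mult_swap) (simp_all add: density_op_def)
  have "C = Im (t - W)" and "D = Re (t - W)"
    by (simp_all add: C_def D_def commutator_def anticommutator_def matrix_diff_ldistrib
        matrix_add_ldistrib trace_sub trace_add swap t_def[symmetric] Re_divide Im_divide)
  then have bound: "C\<^sup>2 + D\<^sup>2 \<le> var_phi \<rho> A \<phi> * var_phi \<rho> B \<phi>"
    using var_phi_mult_ge_cmod[OF assms(1-4)] by (simp add: W_def t_def cmod_power2)
  moreover have "var_phi \<rho> A \<phi> * var_phi \<rho> B \<phi> \<le> var_w_phi \<rho> A \<phi> * var_w_phi \<rho> B \<phi>"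
    if "Re (cinner \<phi> (\<rho> *v \<phi>)) > 0"
    using assms(1-4) that
    by (intro mult_mono') (simp_all add: var_phi_le_var_w_phi var_phi_nonneg)
  ultimately show ?thesis by (smt (verit) zero_le_power2)
qed

end
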